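(* Let $N\ge2$, $\rho\in(0,1)\setminus\{\tfrac12\}$, $f<0$, $g<0$, and $\nu=i\omega$ with $\omega\in\mathbb{R}\setminus\{0\}$. Then for every $k\in\{1,\dots,N\}$, whenever the denominator below is nonzero, $$a_k(\nu)=\kappa^k\,\frac{(\mu_+-\mu_+^{-1})\mu_+^{N-k}-(\mu_--\mu_-^{-1})\mu_-^{N-k}}{(\mu_+-\mu_+^{-1})\mu_+^{N}-(\mu_--\mu_-^{-1})\mu_-^{N}},$$ where $\mu_\pm=\mu_\pm(\nu)$.
   Context: Model and $a_k$: agents $0,\dots,N$ with deviations $z_k$, leader $z_0$ prescribed; for $1\le i\le N-1$, $\ddot z_i=f\{z_i-(1-\rho)z_{i-1}-\rho z_{i+1}\}+g\{\dot z_i-(1-\rho)\dot z_{i-1}-\rho\dot z_{i+1}\}$; $\ddot z_N=f\{z_N-z_{N-1}\}+g\{\dot z_N-\dot z_{N-1}\}$. Written as $\dot z=Mz+\Gamma_0(t)$ with $z=(z_1,\dot z_1,\dots,z_N,\dot z_N)^T$, $M=I_N\otimes A+P\otimes K$, $A=\begin{pmatrix}0&1\\0&0\end{pmatrix}$, $K=\begin{pmatrix}0&0\\ f&g\end{pmatrix}$, $P=I_N-Q_\rho$ ($Q_\rho$: zero diagonal, $(Q_\rho)_{i,i+1}=\rho$ for $1\le i\le N-1$, $(Q_\rho)_{i,i-1}=1-\rho$ for $2\le i\le N-1$, $(Q_\rho)_{N,N-1}=1$, else $0$). For $\nu\in i\mathbb{R}$ not an eigenvalue of $M$, $a(\nu)=-(M-\nu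 I)^{-1}g_0(\nu)$ with $g_0(\nu)=-(1-\rho)(f+g\nu)e_2$, and $a_k(\nu)$ is the $(2k-1)$-th entry of $a(\nu)$ (the steady-state amplitude of $z_k$ when $z_0(t)=e^{\nu t}$). Notation: $\kappa=\frac{1-\rho}{\rho}$; $\gamma(\nu)=\frac{f+g\nu-\nu^2}{f+g\nu}$; $\mu_\pm(\nu)=\frac{1}{2\rho}\left(\gamma\pm\sqrt{\gamma^2-4\rho(1-\rho)}\right)$, the two roots of $\rho\mu^2-\gamma\mu+(1-\rho)=0$. Branch convention: for $w\neq0$, $\sqrt w$ is the square root of $w$ whose argument lies in $[0,\pi)$ (branch cut along the positive real axis). *)

theory Defs
  imports "Jordan_Normal_Form.Char_Poly" "Jordan_Normal_Form.Gauss_Jordan_Elimination"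
begin

(* Agent k (1 <= k <= N) corresponds to
   row/column index k-1 of the N x N matrices, and to positions 2(k-1) (z_k)
   and 2(k-1)+1 (dz_k) of the 2N-dimensional state vector. *)

definition A_mat :: "complex mat" where
  "A_mat = mat_of_rows_list 2 [[0, 1], [0, 0]]"

definition K_mat :: "real \<Rightarrow> real \<Rightarrow> complex mat" where
  "K_mat f g = mat_of_rows_list 2 [[0, 0], [complex_of_real f, complex_of_real g]]"

(* Q_rho, 0-based: (Q)_{i,i+1} = rho for agent i+1 <= N-1, (Q)_{i,i-1} = 1-rho for
   2 <= agent i+1 <= N-1, (Q)_{N,N-1} = 1 (1-based), else 0 *)
definition Q_mat :: "nat \<Rightarrow> real \<Rightarrow> complex mat" where
  "Q_mat N \<rho> = mat N N (\<lambda>(i, j).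
      if i + 1 \<le> N - 1 \<and> j = i + 1 then complex_of_real \<rho>
      else if 2 \<le> i + 1 \<and> i + 1 \<le> N - 1 \<and> j + 1 = i then complex_of_real (1 - \<rho>)
      else if i + 1 = N \<and> j + 2 = N then 1
      else 0)"

definition P_mat :: "nat \<Rightarrow> real \<Rightarrow> complex mat" where
  "P_mat N \<rho> = 1\<^sub>m N - Q_mat N \<rho>"

definition kron2 :: "complex mat \<Rightarrow> complex mat \<Rightarrow> complex mat" where
  "kron2 X Y = mat (2 * dim_row X) (2 * dim_col X)
      (\<lambda>(i, j). X $$ (i div 2, j div 2) * Y $$ (i mod 2, j mod 2))"

definition M_mat :: "nat \<Rightarrow> real \<Rightarrow> real \<Rightarrow> real \<Rightarrow> complex mat" where
  "M_mat N \<rho> f g = kron2 (1\<^sub>m N) A_mat + kron2 (P_mat N \<rho>) (K_mat f g)"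

definition g0_vec :: "nat \<Rightarrow> real \<Rightarrow> real \<Rightarrow> real \<Rightarrow> complex \<Rightarrow> complex vec" where
  "g0_vec N \<rho> f g \<nu> = (- (complex_of_real (1 - \<rho>) * (complex_of_real f + complex_of_real g * \<nu>)))
      \<cdot>\<^sub>v unit_vec (2 * N) 1"

definition a_vec :: "nat \<Rightarrow> real \<Rightarrow> real \<Rightarrow> real \<Rightarrow> complex \<Rightarrow> complex vec" where
  "a_vec N \<rho> f g \<nu> =
     - (the (mat_inverse (M_mat N \<rho> f g - \<nu> \<cdot>\<^sub>m 1\<^sub>m (2 * N))) *\<^sub>v g0_vec N \<rho> f g \<nu>)"

(* a_k(nu): the (2k-1)-th entry (1-based), i.e. index 2k-2 (0-based) *)
definition a_k :: "nat \<Rightarrow> real \<Rightarrow> real \<Rightarrow> real \<Rightarrow> complex \<Rightarrow> nat \<Rightarrow> complex" where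
  "a_k N \<rho> f g \<nu> k = a_vec N \<rho> f g \<nu> $ (2 * k - 2)"

definition kappa :: "real \<Rightarrow> real" where
  "kappa \<rho> = (1 - \<rho>) / \<rho>"

definition gamma_fn :: "real \<Rightarrow> real \<Rightarrow> complex \<Rightarrow> complex" where
  "gamma_fn f g \<nu> = (complex_of_real f + complex_of_real g * \<nu> - \<nu>\<^sup>2)
                      / (complex_of_real f + complex_of_real g * \<nu>)"

definition sqrt_br :: "complex \<Rightarrow> complex" where
  "sqrt_br w = (if w = 0 then 0 else (THE s. s\<^sup>2 = w \<and> 0 \<le> Arg s \<and> Arg s < pi))"

definition mu_plus :: "real \<Rightarrow> real \<Rightarrow> real \<Rightarrow> complex \<Rightarrow> complex" where
  "mu_plus \<rho> f g \<nu> = (gamma_fn f g \<nu> + sqrt_br ((gamma_fn f g \<nu>)\<^sup>2 - 4 * complex_of_real (\<rho> * (1 - \<rho>))))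
                        / (2 * complex_of_real \<rho>)"

definition mu_minus :: "real \<Rightarrow> real \<Rightarrow> real \<Rightarrow> complex \<Rightarrow> complex" where
  "mu_minus \<rho> f g \<nu> = (gamma_fn f g \<nu> - sqrt_br ((gamma_fn f g \<nu>)\<^sup>2 - 4 * complex_of_real (\<rho> * (1 - \<rho>))))
                        / (2 * complex_of_real \<rho>)"

end

theory Submission
  imports Defs
begin

(* Look for the response in the form z_k = b_k e^(nu t).  Substituting this ansatz into
   the equations of motion shows that a(nu) is the "state vector" of b (entries b_k and
   nu b_k), provided b solves the scalar boundary value problem
     b_0 = 1,   rho b_(j+2) - gamma b_(j+1) + (1 - rho) b_j = 0,   gamma b_N = b_(N-1),
   where gamma = gamma(nu) and the dispersion relation nu^2 = (f + g nu)(1 - gamma) holds.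
   The roots mu_+ and mu_- of rho mu^2 - gamma mu + (1 - rho) = 0 generate the solutions of
   the recurrence, and the combination chain_profile below also meets both boundary
   conditions; since M - nu I is invertible, the steady state is unique, so a_k = b_k. *)

lemma Arg_upper_half_iff:
  assumes "s \<noteq> 0"
  shows "(0 \<le> Arg s \<and> Arg s < pi) \<longleftrightarrow> (0 < Im s \<or> (Im s = 0 \<and> 0 < Re s))"
proof -
  have n: "0 < cmod s" using assms by simp
  have Im: "Im s = sin (Arg s) * cmod s" and Re: "Re s = cos (Arg s) * cmod s"
    using sin_Arg[OF assms] cos_Arg[OF assms] n by simp_all
  consider (neg) "Arg s < 0" | (zero) "Arg s = 0" | (mid) "0 < Arg s" "Arg s < pi" | (pi) "Arg s = pi"
    using Arg_bounded[of s] by linarith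
  then show ?thesis
  proof cases
    case neg
    have "0 < sin (- Arg s)" using neg Arg_bounded[of s] by (intro sin_gt_zero) auto
    then have "Im s < 0" using Im n by (simp add: mult_neg_pos)
    then show ?thesis using neg by simp
  next
    case mid
    then show ?thesis using sin_gt_zero[of "Arg s"] Im n by simp
  qed (use Im Re n in simp_all)
qed

(* The branch sqrt_br is a square root: the defining description has a unique witness,
   namely the one of the two roots +-c that lies in the closed upper half plane. *)
lemma sqrt_br_square: "(sqrt_br w)\<^sup>2 = w"
proof (cases "w = 0")
  case False
  let ?branch = "\<lambda>s. s\<^sup>2 = w \<and> 0 \<le> Arg s \<and> Arg s < pi"
  have nz: "s \<noteq> 0" if "s\<^sup>2 = w" for s using that False by auto
  define c where "c = csqrt w"
  have c: "c\<^sup>2 = w" unfolding c_def by simp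
  define s where "s = (if 0 \<le> Arg c \<and> Arg c < pi then c else - c)"
  have s: "?branch s"
  proof -
    have "0 \<le> Arg (- c) \<and> Arg (- c) < pi" if "\<not> (0 \<le> Arg c \<and> Arg c < pi)"
      using that Arg_upper_half_iff[of c] Arg_upper_half_iff[of "- c"] nz[OF c]
      by (auto simp: complex_eq_iff)
    then show ?thesis unfolding s_def using c by auto
  qed
  have "t = s" if t: "?branch t" for t
  proof -
    have "(t - s) * (t + s) = 0" using t s by (simp add: algebra_simps power2_eq_square)
    then have "t = s \<or> t = - s" by (auto simp: add_eq_0_iff2)
    moreover have "\<not> ?branch (- s)"
      using s Arg_upper_half_iff[of s] Arg_upper_half_iff[of "- s"] nz[of s] by auto
    ultimately show ?thesis using t by auto
  qed
  with s have "?branch (THE s. ?branch s)" by (intro theI[of ?branch s])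
  then show ?thesis using False by (simp add: sqrt_br_def)
qed (simp add: sqrt_br_def)

lemma mu_vieta:
  assumes "\<rho> \<noteq> 0"
  shows "complex_of_real \<rho> * (mu_plus \<rho> f g \<nu> + mu_minus \<rho> f g \<nu>) = gamma_fn f g \<nu>"
    and "complex_of_real \<rho> * (mu_plus \<rho> f g \<nu> * mu_minus \<rho> f g \<nu>) = 1 - complex_of_real \<rho>"
proof -
  define \<gamma> where "\<gamma> = gamma_fn f g \<nu>"
  define s where "s = sqrt_br (\<gamma>\<^sup>2 - 4 * complex_of_real (\<rho> * (1 - \<rho>)))"
  have r: "complex_of_real \<rho> \<noteq> 0" using assms by simp
  have p: "mu_plus \<rho> f g \<nu> = (\<gamma> + s) / (2 * complex_of_real \<rho>)" and q: "mu_minus \<rho> f g \<nu> = (\<gamma> - s) / (2 * complex_of_real \<rho>)"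
    unfolding mu_plus_def mu_minus_def \<gamma>_def s_def by simp_all
  have s2: "s\<^sup>2 = \<gamma>\<^sup>2 - 4 * complex_of_real \<rho> * (1 - complex_of_real \<rho>)" unfolding s_def by (simp add: sqrt_br_square)
  show "complex_of_real \<rho> * (mu_plus \<rho> f g \<nu> + mu_minus \<rho> f g \<nu>) = gamma_fn f g \<nu>"
    unfolding p q \<gamma>_def using r by (simp add: field_simps)
  have "complex_of_real \<rho> * ((\<gamma> + s) / (2 * complex_of_real \<rho>) * ((\<gamma> - s) / (2 * complex_of_real \<rho>))) = (\<gamma>\<^sup>2 - s\<^sup>2) / (4 * complex_of_real \<rho>)"
    using r by (simp add: field_simps power2_eq_square)
  also have "\<dots> = 1 - complex_of_real \<rho>" unfolding s2 using r by (simp add: field_simps)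
  finally show "complex_of_real \<rho> * (mu_plus \<rho> f g \<nu> * mu_minus \<rho> f g \<nu>) = 1 - complex_of_real \<rho>"
    unfolding p q .
qed

(* The candidate amplitude profile along the platoon: a combination of the geometric
   solutions q^k and p^k of the recurrence, normalised so that the leader has amplitude 1
   and the free end condition at agent N holds. *)
definition chain_profile :: "complex \<Rightarrow> complex \<Rightarrow> nat \<Rightarrow> nat \<Rightarrow> complex" where
  "chain_profile p q N k =
     ((p - inverse p) * p ^ N * q ^ k - (q - inverse q) * q ^ N * p ^ k)
     / ((p - inverse p) * p ^ N - (q - inverse q) * q ^ N)"

lemma chain_profile_start:
  assumes "(p - inverse p) * p ^ N - (q - inverse q) * q ^ N \<noteq> 0"
  shows "chain_profile p q N 0 = 1"
  using assms by (simp add: chain_profile_def)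

(* The powers of a root of  r x^2 - gamma x + (1 - r) = 0  solve the three-term recurrence;
   the root equation is expressed through Vieta's relations for the pair p, q. *)
lemma root_powers_recurrence:
  fixes r \<gamma> p q :: complex
  assumes "r * (p + q) = \<gamma>" and "r * (p * q) = 1 - r"
  shows "r * p ^ (k + 2) - \<gamma> * p ^ (k + 1) + (1 - r) * p ^ k = 0"
proof -
  have "r * p ^ (k + 2) - \<gamma> * p ^ (k + 1) + (1 - r) * p ^ k
      = p ^ k * (r * p\<^sup>2 - r * (p + q) * p + r * (p * q))"
    unfolding assms(1)[symmetric] assms(2)[symmetric] by (simp add: algebra_simps power2_eq_square)
  also have "\<dots> = 0" by (simp add: algebra_simps power2_eq_square)
  finally show ?thesis .
qed

lemma chain_profile_recurrence:
  fixes r \<gamma> p q :: complex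
  assumes "r * (p + q) = \<gamma>" and "r * (p * q) = 1 - r"
  shows "r * chain_profile p q N (k + 2) - \<gamma> * chain_profile p q N (k + 1)
           + (1 - r) * chain_profile p q N k = 0"
proof -
  define \<alpha> where "\<alpha> = (p - inverse p) * p ^ N"
  define \<beta> where "\<beta> = (q - inverse q) * q ^ N"
  have b: "chain_profile p q N j = (\<alpha> * q ^ j - \<beta> * p ^ j) / (\<alpha> - \<beta>)" for j
    unfolding chain_profile_def \<alpha>_def \<beta>_def ..
  have "r * chain_profile p q N (k + 2) - \<gamma> * chain_profile p q N (k + 1)
           + (1 - r) * chain_profile p q N k
      = (\<alpha> * (r * q ^ (k + 2) - \<gamma> * q ^ (k + 1) + (1 - r) * q ^ k)
         - \<beta> * (r * p ^ (k + 2) - \<gamma> * p ^ (k + 1) + (1 - r) * p ^ k)) / (\<alpha> - \<beta>)"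
    unfolding b by (simp add: diff_divide_distrib add_divide_distrib algebra_simps)
  also have "\<dots> = 0"
    using root_powers_recurrence[OF assms] root_powers_recurrence[of r q p \<gamma>] assms
    by (simp add: ac_simps)
  finally show ?thesis .
qed

(* The free end condition gamma b_N = b_(N-1) of the last agent, which only has a
   predecessor.  It reduces to  gamma p q (X - Y) = X p - Y q  for X = p - 1/p, Y = q - 1/q. *)
lemma chain_profile_end:
  fixes r \<gamma> p q :: complex
  assumes "r * (p + q) = \<gamma>" and "r * (p * q) = 1 - r" and "p \<noteq> 0" and "q \<noteq> 0"
    and "1 \<le> N"
  shows "\<gamma> * chain_profile p q N N = chain_profile p q N (N - 1)"
proof -
  define X where "X = p - inverse p"
  define Y where "Y = q - inverse q"
  define D where "D = X * p ^ N - Y * q ^ N"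
  obtain n where n: "N = Suc n" using assms(5) by (cases N) auto
  have bN: "chain_profile p q N N = (p * q) ^ N * (X - Y) / D"
    unfolding chain_profile_def X_def[symmetric] Y_def[symmetric] D_def[symmetric]
    by (simp add: power_mult_distrib algebra_simps)
  have bN1: "chain_profile p q N (N - 1) = (p * q) ^ n * (X * p - Y * q) / D"
    unfolding chain_profile_def X_def[symmetric] Y_def[symmetric] D_def[symmetric]
    by (simp add: n power_mult_distrib algebra_simps)
  have "p * q * (X - Y) = (p - q) * (p * q + 1)"
    unfolding X_def Y_def using assms(3,4) by (simp add: field_simps)
  then have "\<gamma> * (p * q * (X - Y)) = (p + q) * (p - q) * (r * (p * q + 1))"
    unfolding assms(1)[symmetric] by (simp only: ac_simps)
  also have "r * (p * q + 1) = 1" using assms(2) by (simp add: algebra_simps)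
  also have "(p + q) * (p - q) * 1 = X * p - Y * q"
    unfolding X_def Y_def using assms(3,4) by (simp add: algebra_simps power2_eq_square)
  finally have key: "\<gamma> * (p * q * (X - Y)) = X * p - Y * q" .
  have "\<gamma> * chain_profile p q N N = (p * q) ^ n * (\<gamma> * (p * q * (X - Y))) / D"
    unfolding bN by (simp add: n ac_simps)
  then show ?thesis unfolding key bN1 .
qed

lemma chain_profile_closed_form:
  assumes "k \<le> N"
  shows "chain_profile p q N k = (p * q) ^ k *
    (((p - inverse p) * p ^ (N - k) - (q - inverse q) * q ^ (N - k))
     / ((p - inverse p) * p ^ N - (q - inverse q) * q ^ N))"
proof -
  have "p ^ N = p ^ k * p ^ (N - k)" "q ^ N = q ^ k * q ^ (N - k)"
    using assms by (simp_all add: power_add[symmetric])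
  then show ?thesis unfolding chain_profile_def power_mult_distrib
    by (simp add: divide_inverse algebra_simps)
qed


lemma M_mat_dims [simp]:
  "dim_row (M_mat N \<rho> f g) = 2 * N" "dim_col (M_mat N \<rho> f g) = 2 * N"
  by (simp_all add: M_mat_def kron2_def P_mat_def Q_mat_def)

(* Block structure of M = I (x) A + P (x) K: even rows encode  d/dt z_j = dz_j,
   odd rows the acceleration law weighted by the coupling matrix P. *)
lemma M_mat_entries:
  assumes "j < N" and "m < N"
  shows "M_mat N \<rho> f g $$ (2 * j, 2 * m) = 0"
    and "M_mat N \<rho> f g $$ (2 * j, 2 * m + 1) = (if j = m then 1 else 0)"
    and "M_mat N \<rho> f g $$ (2 * j + 1, 2 * m) = P_mat N \<rho> $$ (j, m) * f"
    and "M_mat N \<rho> f g $$ (2 * j + 1, 2 * m + 1) = P_mat N \<rho> $$ (j, m) * g"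
  using assms
  by (simp_all add: M_mat_def kron2_def P_mat_def Q_mat_def A_mat_def K_mat_def
      mat_of_rows_list_def)

(* The state (z_1, dz_1, ..., z_N, dz_N) of the response z_k = y_(k-1) e^(nu t). *)
definition state_vec :: "nat \<Rightarrow> complex \<Rightarrow> (nat \<Rightarrow> complex) \<Rightarrow> complex vec" where
  "state_vec N \<nu> y = vec (2 * N) (\<lambda>i. if even i then y (i div 2) else \<nu> * y (i div 2))"

lemma sum_lessThan_double:
  fixes h :: "nat \<Rightarrow> 'a::comm_monoid_add"
  shows "(\<Sum>l<2 * N. h l) = (\<Sum>m<N. h (2 * m) + h (2 * m + 1))"
  by (induction N) (auto simp: sum.distrib add_ac)

lemma mult_state_vec:
  assumes "dim_col B = 2 * N" and "i < dim_row B"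
  shows "(B *\<^sub>v state_vec N \<nu> y) $ i = (\<Sum>m<N. (B $$ (i, 2 * m) + \<nu> * B $$ (i, 2 * m + 1)) * y m)"
proof -
  have "(B *\<^sub>v state_vec N \<nu> y) $ i = (\<Sum>l<2 * N. B $$ (i, l) * state_vec N \<nu> y $ l)"
    using assms by (simp add: state_vec_def scalar_prod_def lessThan_atLeast0)
  also have "\<dots> = (\<Sum>m<N. (B $$ (i, 2 * m) + \<nu> * B $$ (i, 2 * m + 1)) * y m)"
    unfolding sum_lessThan_double by (intro sum.cong refl) (simp add: state_vec_def algebra_simps)
  finally show ?thesis .
qed


lemma P_mat_entry:
  assumes "j < N" and "m < N"
  shows "P_mat N \<rho> $$ (j, m) = (if m = j then 1 else 0)
    - (if m = j + 1 \<and> j + 2 \<le> N then \<rho> else 0)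
    - (if m + 1 = j \<and> j + 2 \<le> N then 1 - \<rho> else 0)
    - (if m + 2 = N \<and> j + 1 = N then 1 else 0)"
  using assms by (auto simp: P_mat_def Q_mat_def)

(* Row j of P applied to the amplitudes b_1, ..., b_N: the discrete coupling operator,
   with the leader term (1 - rho) b_0 of row 0 added back so that the formula is uniform. *)
lemma P_row_sum:
  assumes "2 \<le> N" and "j < N"
  shows "(\<Sum>m<N. P_mat N \<rho> $$ (j, m) * b (m + 1)) =
    (if j + 1 = N then b N - b (N - 1)
     else b (j + 1) - \<rho> * b (j + 2) - (1 - \<rho>) * b j + (if j = 0 then (1 - \<rho>) * b 0 else 0))"
proof (cases "j + 1 = N")
  case True
  have "P_mat N \<rho> $$ (j, m) * b (m + 1) =
      (if m = j then b (j + 1) else 0) - (if m = N - 2 then b (N - 1) else 0)" if "m < N" for m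
    unfolding P_mat_entry[OF assms(2) that] using assms True by (auto simp: left_diff_distrib)
  then have "(\<Sum>m<N. P_mat N \<rho> $$ (j, m) * b (m + 1)) =
      (\<Sum>m<N. (if m = j then b (j + 1) else 0) - (if m = N - 2 then b (N - 1) else 0))"
    by (intro sum.cong refl) simp
  then show ?thesis using assms True by (simp add: sum_subtractf)
next
  case False
  have "P_mat N \<rho> $$ (j, m) * b (m + 1) =
      (if m = j then b (j + 1) else 0) - (if m = j + 1 then \<rho> * b (j + 2) else 0)
      - (if m = j - 1 then (if j = 0 then 0 else (1 - \<rho>) * b j) else 0)" if "m < N" for m
    unfolding P_mat_entry[OF assms(2) that] using assms False
    by (cases "j = 0") (auto simp: left_diff_distrib)
  then have "(\<Sum>m<N. P_mat N \<rho> $$ (j, m) * b (m + 1)) =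
      (\<Sum>m<N. (if m = j then b (j + 1) else 0) - (if m = j + 1 then \<rho> * b (j + 2) else 0)
      - (if m = j - 1 then (if j = 0 then 0 else (1 - \<rho>) * b j) else 0))"
    by (intro sum.cong refl) simp
  also have "\<dots> = b (j + 1) - \<rho> * b (j + 2) - (if j = 0 then 0 else (1 - \<rho>) * b j)"
    using assms False by (simp add: sum_subtractf less_imp_diff_less)
  also have "\<dots> = b (j + 1) - \<rho> * b (j + 2) - (1 - \<rho>) * b j
      + (if j = 0 then (1 - \<rho>) * b 0 else 0)"
    by (cases "j = 0") simp_all
  finally show ?thesis using False by simp
qed


lemma char_mat_entry:
  assumes "i < 2 * N" and "l < 2 * N"
  shows "(M_mat N \<rho> f g - \<nu> \<cdot>\<^sub>m 1\<^sub>m (2 * N)) $$ (i, l) = M_mat N \<rho> f g $$ (i, l) - (if i = l then \<nu> else 0)"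
  using assms by simp

(* Even rows of (M - nu I) vanish on state vectors: the velocity of z_k e^(nu t) is
   nu z_k e^(nu t). *)
lemma char_mat_state_even:
  assumes "j < N"
  shows "((M_mat N \<rho> f g - \<nu> \<cdot>\<^sub>m 1\<^sub>m (2 * N)) *\<^sub>v state_vec N \<nu> y) $ (2 * j) = 0"
proof -
  let ?B = "M_mat N \<rho> f g - \<nu> \<cdot>\<^sub>m 1\<^sub>m (2 * N)"
  have "(?B *\<^sub>v state_vec N \<nu> y) $ (2 * j) = (\<Sum>m<N. (?B $$ (2 * j, 2 * m) + \<nu> * ?B $$ (2 * j, 2 * m + 1)) * y m)"
    using assms by (intro mult_state_vec) simp_all
  also have "\<dots> = (\<Sum>m<N. 0)"
  proof (intro sum.cong refl)
    fix m assume "m \<in> {..<N}"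
    then have m: "m < N" by simp
    have i: "2 * j < 2 * N" and l: "2 * m < 2 * N" "2 * m + 1 < 2 * N" using assms m by simp_all
    have "2 * j \<noteq> 2 * m + 1" by presburger
    then show "(?B $$ (2 * j, 2 * m) + \<nu> * ?B $$ (2 * j, 2 * m + 1)) * y m = 0"
      unfolding char_mat_entry[OF i l(1)] char_mat_entry[OF i l(2)] M_mat_entries[OF assms m]
      by simp
  qed
  finally show ?thesis by simp
qed

lemma char_mat_state_odd:
  assumes "j < N"
  shows "((M_mat N \<rho> f g - \<nu> \<cdot>\<^sub>m 1\<^sub>m (2 * N)) *\<^sub>v state_vec N \<nu> y) $ (2 * j + 1)
    = (f + g * \<nu>) * (\<Sum>m<N. P_mat N \<rho> $$ (j, m) * y m) - \<nu>\<^sup>2 * y j"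
proof -
  let ?B = "M_mat N \<rho> f g - \<nu> \<cdot>\<^sub>m 1\<^sub>m (2 * N)"
  have "(?B *\<^sub>v state_vec N \<nu> y) $ (2 * j + 1)
      = (\<Sum>m<N. (?B $$ (2 * j + 1, 2 * m) + \<nu> * ?B $$ (2 * j + 1, 2 * m + 1)) * y m)"
    using assms by (intro mult_state_vec) simp_all
  also have "\<dots> = (\<Sum>m<N. (f + g * \<nu>) * (P_mat N \<rho> $$ (j, m) * y m) - (if m = j then \<nu>\<^sup>2 * y j else 0))"
  proof (intro sum.cong refl)
    fix m assume "m \<in> {..<N}"
    then have m: "m < N" by simp
    have i: "2 * j + 1 < 2 * N" and l: "2 * m < 2 * N" "2 * m + 1 < 2 * N" using assms m by simp_all
    have "2 * j + 1 \<noteq> 2 * m" by presburger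
    then show "(?B $$ (2 * j + 1, 2 * m) + \<nu> * ?B $$ (2 * j + 1, 2 * m + 1)) * y m
        = (f + g * \<nu>) * (P_mat N \<rho> $$ (j, m) * y m) - (if m = j then \<nu>\<^sup>2 * y j else 0)"
      unfolding char_mat_entry[OF i l(1)] char_mat_entry[OF i l(2)] M_mat_entries[OF assms m]
      by (auto simp: algebra_simps power2_eq_square)
  qed
  also have "\<dots> = (f + g * \<nu>) * (\<Sum>m<N. P_mat N \<rho> $$ (j, m) * y m) - \<nu>\<^sup>2 * y j"
    using assms by (simp add: sum_subtractf sum_distrib_left)
  finally show ?thesis .
qed


lemma recurrence_solves_char_system:
  fixes b :: "nat \<Rightarrow> complex" and \<gamma> :: complex
  assumes N: "2 \<le> N"
    and dispersion: "\<nu>\<^sup>2 = (f + g * \<nu>) * (1 - \<gamma>)"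
    and start: "b 0 = 1"
    and recurrence: "\<And>j. \<rho> * b (j + 2) - \<gamma> * b (j + 1) + (1 - \<rho>) * b j = 0"
    and last: "\<gamma> * b N = b (N - 1)"
  shows "(M_mat N \<rho> f g - \<nu> \<cdot>\<^sub>m 1\<^sub>m (2 * N)) *\<^sub>v state_vec N \<nu> (\<lambda>m. b (m + 1))
    = - g0_vec N \<rho> f g \<nu>"
proof (rule eq_vecI)
  let ?B = "M_mat N \<rho> f g - \<nu> \<cdot>\<^sub>m 1\<^sub>m (2 * N)"
  let ?\<phi> = "complex_of_real f + g * \<nu>"
  show "dim_vec (?B *\<^sub>v state_vec N \<nu> (\<lambda>m. b (m + 1))) = dim_vec (- g0_vec N \<rho> f g \<nu>)"
    by (simp add: g0_vec_def)
  fix i assume "i < dim_vec (- g0_vec N \<rho> f g \<nu>)"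
  then have i: "i < 2 * N" by (simp add: g0_vec_def)
  have rhs: "(- g0_vec N \<rho> f g \<nu>) $ i = (if i = 1 then (1 - \<rho>) * ?\<phi> else 0)"
    using i by (simp add: g0_vec_def unit_vec_def)
  define j where "j = i div 2"
  have j: "j < N" using i unfolding j_def by simp
  have "i = 2 * j \<or> i = 2 * j + 1" unfolding j_def by presburger
  then consider (even) "i = 2 * j" | (odd) "i = 2 * j + 1" by blast
  then show "(?B *\<^sub>v state_vec N \<nu> (\<lambda>m. b (m + 1))) $ i = (- g0_vec N \<rho> f g \<nu>) $ i"
  proof cases
    case even
    then show ?thesis using char_mat_state_even[OF j] rhs by simp
  next
    case odd
    have "(?B *\<^sub>v state_vec N \<nu> (\<lambda>m. b (m + 1))) $ i
        = ?\<phi> * (\<Sum>m<N. P_mat N \<rho> $$ (j, m) * b (m + 1)) - \<nu>\<^sup>2 * b (j + 1)"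
      unfolding odd by (rule char_mat_state_odd[OF j])
    also have "\<dots> = (if i = 1 then (1 - \<rho>) * ?\<phi> else 0)"
    proof (cases "j + 1 = N")
      case True
      then have "i \<noteq> 1" using odd N by simp
      have "?\<phi> * (\<Sum>m<N. P_mat N \<rho> $$ (j, m) * b (m + 1)) - \<nu>\<^sup>2 * b (j + 1)
          = ?\<phi> * (\<gamma> * b N - b (N - 1))"
        unfolding P_row_sum[OF N j] dispersion using True by (simp add: algebra_simps)
      then show ?thesis using last \<open>i \<noteq> 1\<close> by simp
    next
      case False
      have "?\<phi> * (\<Sum>m<N. P_mat N \<rho> $$ (j, m) * b (m + 1)) - \<nu>\<^sup>2 * b (j + 1)
          = ?\<phi> * (\<gamma> * b (j + 1) - \<rho> * b (j + 2) - (1 - \<rho>) * b j)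
            + (if j = 0 then (1 - \<rho>) * ?\<phi> else 0)"
        unfolding P_row_sum[OF N j] dispersion using False start by (simp add: algebra_simps)
      moreover have "\<gamma> * b (j + 1) - \<rho> * b (j + 2) - (1 - \<rho>) * b j = 0"
        using recurrence[of j] by (simp add: algebra_simps)
      ultimately show ?thesis using odd by simp
    qed
    finally show ?thesis unfolding rhs .
  qed
qed

lemma mat_inverse_solves:
  fixes B :: "'a :: field mat"
  assumes B: "B \<in> carrier_mat n n" and det: "det B \<noteq> 0" and c: "c \<in> carrier_vec n"
    and sol: "B *\<^sub>v c = d"
  shows "the (mat_inverse B) *\<^sub>v d = c"
proof -
  have "B \<in> Units (ring_mat TYPE('a) n n)" by (rule det_non_zero_imp_unit[OF B det])
  then obtain Bi where Bi: "mat_inverse B = Some Bi"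
    using mat_inverse(1)[OF B, of n] by (cases "mat_inverse B") auto
  with mat_inverse(2)[OF B] have "Bi * B = 1\<^sub>m n" and "Bi \<in> carrier_mat n n" by auto
  then show ?thesis using Bi B c unfolding sol[symmetric] by (simp flip: assoc_mult_mat_vec)
qed

lemma mult_mat_vec_uminus:
  fixes w :: "'a :: comm_ring_1 vec"
  shows "dim_vec w = dim_col A \<Longrightarrow> A *\<^sub>v (- w) = - (A *\<^sub>v w)"
  by (intro eq_vecI) (auto simp: scalar_prod_def sum_negf)

lemma a_vec_eq_solution:
  assumes "\<not> eigenvalue (M_mat N \<rho> f g) \<nu>" and c: "c \<in> carrier_vec (2 * N)"
    and sol: "(M_mat N \<rho> f g - \<nu> \<cdot>\<^sub>m 1\<^sub>m (2 * N)) *\<^sub>v c = - g0_vec N \<rho> f g \<nu>"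
  shows "a_vec N \<rho> f g \<nu> = c"
proof -
  let ?B = "M_mat N \<rho> f g - \<nu> \<cdot>\<^sub>m 1\<^sub>m (2 * N)"
  have M: "M_mat N \<rho> f g \<in> carrier_mat (2 * N) (2 * N)" by (simp add: carrier_matI)
  have B: "?B \<in> carrier_mat (2 * N) (2 * N)" by (simp add: carrier_matI)
  have "char_matrix (M_mat N \<rho> f g) \<nu> = ?B"
    unfolding char_matrix_def by (intro eq_matI) simp_all
  then have det: "det ?B \<noteq> 0" using assms(1) eigenvalue_det[OF M] by simp
  have "?B *\<^sub>v (- c) = g0_vec N \<rho> f g \<nu>" using c sol by (simp add: mult_mat_vec_uminus)
  then have "the (mat_inverse ?B) *\<^sub>v g0_vec N \<rho> f g \<nu> = - c"
    using mat_inverse_solves[OF B det] c by simp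
  then show ?thesis unfolding a_vec_def by simp
qed


(* On the imaginary axis f + g nu has real part f < 0, hence gamma(nu) is well defined and
   nu^2 = (f + g nu)(1 - gamma(nu)). *)
lemma dispersion_relation:
  assumes "f < 0" and "Re \<nu> = 0"
  shows "\<nu>\<^sup>2 = (f + g * \<nu>) * (1 - gamma_fn f g \<nu>)"
proof -
  have "Re (complex_of_real f + g * \<nu>) = f" using assms(2) by simp
  then have "complex_of_real f + g * \<nu> \<noteq> 0" using assms(1) by (metis less_irrefl zero_complex.sel(1))
  then show ?thesis unfolding gamma_fn_def by (simp add: field_simps)
qed

theorem mainTheorem4:
  fixes N k :: nat and \<rho> f g \<omega> :: real and \<nu> :: complex
  assumes "N \<ge> 2"
    and "0 < \<rho>" and "\<rho> < 1" and "\<rho> \<noteq> 1/2"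
    and "f < 0" and "g < 0"
    and "\<omega> \<noteq> 0" and "\<nu> = \<i> * complex_of_real \<omega>"
    and "\<not> eigenvalue (M_mat N \<rho> f g) \<nu>"
    and "1 \<le> k" and "k \<le> N"
    and "(mu_plus \<rho> f g \<nu> - inverse (mu_plus \<rho> f g \<nu>)) * mu_plus \<rho> f g \<nu> ^ N
         - (mu_minus \<rho> f g \<nu> - inverse (mu_minus \<rho> f g \<nu>)) * mu_minus \<rho> f g \<nu> ^ N \<noteq> 0"
  shows "a_k N \<rho> f g \<nu> k =
    complex_of_real (kappa \<rho> ^ k) *
      (((mu_plus \<rho> f g \<nu> - inverse (mu_plus \<rho> f g \<nu>)) * mu_plus \<rho> f g \<nu> ^ (N - k)
        - (mu_minus \<rho> f g \<nu> - inverse (mu_minus \<rho> f g \<nu>)) * mu_minus \<rho> f g \<nu> ^ (N - k))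
     / ((mu_plus \<rho> f g \<nu> - inverse (mu_plus \<rho> f g \<nu>)) * mu_plus \<rho> f g \<nu> ^ N
        - (mu_minus \<rho> f g \<nu> - inverse (mu_minus \<rho> f g \<nu>)) * mu_minus \<rho> f g \<nu> ^ N))"
proof -
  define p where "p = mu_plus \<rho> f g \<nu>"
  define q where "q = mu_minus \<rho> f g \<nu>"
  define b where "b = chain_profile p q N"
  have sum: "complex_of_real \<rho> * (p + q) = gamma_fn f g \<nu>"
    and prod: "complex_of_real \<rho> * (p * q) = 1 - complex_of_real \<rho>"
    unfolding p_def q_def using mu_vieta assms(2) by simp_all
  have "p \<noteq> 0" "q \<noteq> 0" using prod assms(3) by auto
  have "(M_mat N \<rho> f g - \<nu> \<cdot>\<^sub>m 1\<^sub>m (2 * N)) *\<^sub>v state_vec N \<nu> (\<lambda>m. b (m + 1))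
      = - g0_vec N \<rho> f g \<nu>"
  proof (rule recurrence_solves_char_system[where \<gamma> = "gamma_fn f g \<nu>"])
    show "\<nu>\<^sup>2 = (f + g * \<nu>) * (1 - gamma_fn f g \<nu>)"
      using dispersion_relation assms(5,8) by simp
    show "b 0 = 1" unfolding b_def p_def q_def using chain_profile_start assms(12) by simp
    show "\<rho> * b (j + 2) - gamma_fn f g \<nu> * b (j + 1) + (1 - complex_of_real \<rho>) * b j = 0" for j
      unfolding b_def using chain_profile_recurrence[OF sum prod] by simp
    show "gamma_fn f g \<nu> * b N = b (N - 1)"
      unfolding b_def using chain_profile_end[OF sum prod \<open>p \<noteq> 0\<close> \<open>q \<noteq> 0\<close>] assms(1) by simp
  qed (use assms(1) in simp)
  then have "a_vec N \<rho> f g \<nu> = state_vec N \<nu> (\<lambda>m. b (m + 1))"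
    using a_vec_eq_solution assms(9) by (simp add: state_vec_def)
  moreover have "2 * k - 2 < 2 * N" "even (2 * k - 2)" "(2 * k - 2) div 2 + 1 = k"
    using assms(10,11) by auto
  ultimately have "a_k N \<rho> f g \<nu> k = b k" by (simp add: a_k_def state_vec_def)
  moreover have "complex_of_real (kappa \<rho>) = p * q"
    using prod assms(2) unfolding kappa_def by (simp add: field_simps)
  ultimately show ?thesis
    unfolding b_def chain_profile_closed_form[OF assms(11)] p_def q_def by simp
qed

end
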